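(* Let $A$ be an $m\times m$ coloring matrix and $B=(b_{pq})$ an $m'\times m$ matrix with entries in $\{0,1\}$. Let $A'$ be the $(m+m')\times(m+m')$ block matrix $$A'=\left[\begin{array}{c|c}A&0\\\hline B&0\end{array}\right].$$ Then for every $1\le i\le m$, $F_{A'}^{(i)}(x)=F_A^{(i)}(x)$, and for every $m+1\le i\le m+m'$, $$F_{A'}^{(i)}(x)=\frac{x}{1-\sum_{j=1}^m b_{i-m,j}F_A^{(j)}(x)}.$$
   Context: A plane tree is an unlabeled rooted tree in which the children of every vertex are linearly ordered. A coloring matrix is a square matrix $A=(a_{ij})$ with entries in $\{0,1\}$. An $A$-coloring of a plane tree assigns to each vertex a color (an index of a row of $A$) such that whenever a vertex of color $j$ is a child of a vertex of color $i$, $a_{ij}=1$. Let $t_A^{(i)}(n)$ be the number of pairs (plane tree with $n$ vertices, $A$-coloring of it) in which the root has color $i$, and $F_A^{(i)}(x)=\sum_{n\ge1}t_A^{(i)}(n)x^n$ (formal power series). *)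

theory Defs
  imports "HOL-Computational_Algebra.Formal_Power_Series"
begin

text \<open>A pair (plane tree, colouring of its vertices) is represented as a plane tree
  whose vertices carry a natural-number label (the colour).\<close>
datatype ctree = CNode nat "ctree list"

fun nverts :: "ctree \<Rightarrow> nat" where
  "nverts (CNode c ts) = 1 + sum_list (map nverts ts)"

fun root_color :: "ctree \<Rightarrow> nat" where
  "root_color (CNode c ts) = c"

fun is_coloring :: "nat \<Rightarrow> (nat \<Rightarrow> nat \<Rightarrow> nat) \<Rightarrow> ctree \<Rightarrow> bool" where
  "is_coloring m A (CNode c ts) =
     (c \<in> {1..m} \<and> (\<forall>t\<in>set ts. A c (root_color t) = 1 \<and> is_coloring m A t))"

definition tcount :: "nat \<Rightarrow> (nat \<Rightarrow> nat \<Rightarrow> nat) \<Rightarrow> nat \<Rightarrow> nat \<Rightarrow> nat" where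
  "tcount m A i n = card {t. is_coloring m A t \<and> root_color t = i \<and> nverts t = n}"

definition genF :: "nat \<Rightarrow> (nat \<Rightarrow> nat \<Rightarrow> nat) \<Rightarrow> nat \<Rightarrow> rat fps" where
  "genF m A i = Abs_fps (\<lambda>n. if n \<ge> 1 then of_nat (tcount m A i n) else 0)"

end

theory Submission
  imports Defs
begin

(* Removing the first child of the root splits a tree with root colour i and n >= 2 vertices
   into an arbitrary A-coloured tree whose root colour j has a_ij = 1 and a smaller tree with
   root colour i. Hence F_A^(i) = x + (sum_j a_ij F_A^(j)) F_A^(i), i.e.
   F_A^(i) = x / (1 - sum_j a_ij F_A^(j)). In the block matrix A' the old colours only see old
   colours, so F_A'^(i) = F_A^(i) for i <= m, and a new row i > m of A' is the row i - m of B
   followed by zeros, which turns the functional equation of A' into the claimed one. *)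

unbundle fps_syntax

lemma nverts_pos: "nverts t \<ge> 1"
  by (cases t) auto

lemma nverts_neq_0 [simp]: "nverts t \<noteq> 0"
  using nverts_pos[of t] by simp

lemma length_le_sum_list_nverts: "length ts \<le> sum_list (map nverts ts)"
proof (induction ts)
  case (Cons t ts)
  then show ?case using nverts_pos[of t] by simp
qed simp

lemma root_color_mem: "is_coloring M A t \<Longrightarrow> root_color t \<in> {1..M}"
  by (cases t) auto

lemma finite_colorings_nverts_le: "finite {t. is_coloring M A t \<and> nverts t \<le> n}"
proof (induction n)
  case 0
  then show ?case by simp
next
  case (Suc n)
  let ?S = "{t. is_coloring M A t \<and> nverts t \<le> n}"
  have "{t. is_coloring M A t \<and> nverts t \<le> Suc n} \<subseteq>
        (\<lambda>(c, ts). CNode c ts) ` ({1..M} \<times> {ts. set ts \<subseteq> ?S \<and> length ts \<le> n})"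
  proof
    fix t assume t: "t \<in> {t. is_coloring M A t \<and> nverts t \<le> Suc n}"
    obtain c ts where t_eq: "t = CNode c ts" by (cases t)
    have sum_le: "sum_list (map nverts ts) \<le> n" using t t_eq by simp
    then have "length ts \<le> n" using length_le_sum_list_nverts[of ts] by simp
    moreover have "set ts \<subseteq> ?S"
      using t t_eq sum_le member_le_sum_list[of _ "map nverts ts"] by fastforce
    moreover have "c \<in> {1..M}" using t t_eq by simp
    ultimately show "t \<in> (\<lambda>(c, ts). CNode c ts) ` ({1..M} \<times> {ts. set ts \<subseteq> ?S \<and> length ts \<le> n})"
      using t_eq by auto
  qed
  moreover have "finite ({1..M} \<times> {ts. set ts \<subseteq> ?S \<and> length ts \<le> n})"
    using Suc.IH by (intro finite_cartesian_product finite_lists_length_le) auto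
  ultimately show ?case by (meson finite_imageI finite_subset)
qed

definition colored_trees :: "nat \<Rightarrow> (nat \<Rightarrow> nat \<Rightarrow> nat) \<Rightarrow> nat set \<Rightarrow> nat \<Rightarrow> ctree set" where
  "colored_trees M A C n = {t. is_coloring M A t \<and> root_color t \<in> C \<and> nverts t = n}"

lemma finite_colored_trees: "finite (colored_trees M A C n)"
  by (rule finite_subset[OF _ finite_colorings_nverts_le[of M A n]]) (auto simp: colored_trees_def)

lemma colored_trees_0 [simp]: "colored_trees M A C 0 = {}"
  by (simp add: colored_trees_def)

lemma tcount_eq_card_colored_trees: "tcount M A i n = card (colored_trees M A {i} n)"
  by (simp add: tcount_def colored_trees_def)

lemma card_colored_trees:
  assumes "finite C"
  shows "card (colored_trees M A C n) = (\<Sum>j\<in>C. tcount M A j n)"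
proof -
  have "colored_trees M A C n = (\<Union>j\<in>C. colored_trees M A {j} n)"
    by (auto simp: colored_trees_def)
  also have "card \<dots> = (\<Sum>j\<in>C. card (colored_trees M A {j} n))"
    by (rule card_UN_disjoint)
      (use assms in \<open>simp_all add: finite_colored_trees, auto simp: colored_trees_def\<close>)
  finally show ?thesis by (simp add: tcount_eq_card_colored_trees)
qed

lemma colored_trees_single_vertex:
  assumes "i \<in> {1..M}"
  shows "colored_trees M A {i} 1 = {CNode i []}"
proof (intro equalityI subsetI)
  fix t assume t: "t \<in> colored_trees M A {i} 1"
  obtain c ts where t_eq: "t = CNode c ts" by (cases t)
  have "length ts \<le> 0" using length_le_sum_list_nverts[of ts] t t_eq by (simp add: colored_trees_def)
  then show "t \<in> {CNode i []}" using t t_eq by (simp add: colored_trees_def)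
qed (use assms in \<open>auto simp: colored_trees_def\<close>)

lemma genF_nth: "genF M A i $ n = of_nat (tcount M A i n)"
  by (cases n) (simp_all add: genF_def tcount_eq_card_colored_trees)

fun cons_child :: "ctree \<Rightarrow> ctree \<Rightarrow> ctree" where
  "cons_child t (CNode c ts) = CNode c (t # ts)"

lemma inj_cons_child: "inj (\<lambda>(t, u). cons_child t u)"
proof (rule injI, clarsimp)
  fix t u t' u' assume "cons_child t u = cons_child t' u'"
  then show "t = t' \<and> u = u'" by (cases u; cases u') auto
qed

lemma colored_trees_first_child_decomp:
  assumes "n \<ge> 2"
  shows "colored_trees M A {i} n = (\<lambda>(t, u). cons_child t u) `
           (\<Union>k\<in>{0..n}. colored_trees M A {j. A i j = 1} k \<times> colored_trees M A {i} (n - k))"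
    (is "?T n = _ ` ?pairs")
proof (intro equalityI subsetI)
  fix t assume t: "t \<in> ?T n"
  obtain c ts where t_eq: "t = CNode c ts" by (cases t)
  have "ts \<noteq> []" using t t_eq assms by (auto simp: colored_trees_def)
  then obtain x xs where ts_eq: "ts = x # xs" by (cases ts) auto
  have "x \<in> colored_trees M A {j. A i j = 1} (nverts x)"
    and "CNode i xs \<in> ?T (n - nverts x)" and "nverts x \<le> n"
    using t t_eq ts_eq by (auto simp: colored_trees_def)
  then have "(x, CNode i xs) \<in> ?pairs" by auto
  moreover have "t = cons_child x (CNode i xs)"
    using t t_eq ts_eq by (simp add: colored_trees_def)
  ultimately show "t \<in> (\<lambda>(t, u). cons_child t u) ` ?pairs" by force
next
  fix t assume "t \<in> (\<lambda>(t, u). cons_child t u) ` ?pairs"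
  then obtain k x u where k: "k \<le> n" and x: "x \<in> colored_trees M A {j. A i j = 1} k"
    and u: "u \<in> ?T (n - k)" and t_eq: "t = cons_child x u"
    by auto
  obtain c us where u_eq: "u = CNode c us" by (cases u)
  have "n - k \<noteq> 0" using u by (auto simp: colored_trees_def)
  then show "t \<in> ?T n"
    using k x u t_eq u_eq by (auto simp: colored_trees_def)
qed

lemma card_colored_trees_first_child_decomp:
  assumes "n \<ge> 2"
  shows "card (colored_trees M A {i} n) =
    (\<Sum>k=0..n. card (colored_trees M A {j. A i j = 1} k) * card (colored_trees M A {i} (n - k)))"
proof -
  have "card (colored_trees M A {i} n) =
      card (\<Union>k\<in>{0..n}. colored_trees M A {j. A i j = 1} k \<times> colored_trees M A {i} (n - k))"
    unfolding colored_trees_first_child_decomp[OF assms]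
    by (rule card_image) (rule inj_on_subset[OF inj_cons_child], simp)
  also have "\<dots> = (\<Sum>k=0..n. card (colored_trees M A {j. A i j = 1} k \<times> colored_trees M A {i} (n - k)))"
    by (rule card_UN_disjoint) (simp_all add: finite_colored_trees, auto simp: colored_trees_def)
  finally show ?thesis by (simp add: card_cartesian_product)
qed

lemma nth_sum_row_genF:
  assumes "\<forall>j\<in>{1..M}. A i j \<in> {0, 1}"
  shows "(\<Sum>j=1..M. of_nat (A i j) * genF M A j) $ k = of_nat (card (colored_trees M A {j. A i j = 1} k))"
proof -
  have "(\<Sum>j=1..M. of_nat (A i j) * genF M A j) $ k = (\<Sum>j=1..M. of_nat (A i j) * of_nat (tcount M A j k))"
    by (simp add: fps_sum_nth genF_nth)
  also have "\<dots> = (\<Sum>j=1..M. if A i j = 1 then of_nat (tcount M A j k) else 0)"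
    using assms by (intro sum.cong) auto
  also have "\<dots> = (\<Sum>j\<in>{j\<in>{1..M}. A i j = 1}. of_nat (tcount M A j k))"
    by (rule sum.inter_filter[symmetric]) simp
  also have "colored_trees M A {j. A i j = 1} k = colored_trees M A {j\<in>{1..M}. A i j = 1} k"
    by (auto simp: colored_trees_def dest: root_color_mem)
  ultimately show ?thesis by (simp add: card_colored_trees)
qed

lemma genF_functional_equation:
  assumes "i \<in> {1..M}" and "\<forall>j\<in>{1..M}. A i j \<in> {0, 1}"
  shows "genF M A i = fps_X + (\<Sum>j=1..M. of_nat (A i j) * genF M A j) * genF M A i"
proof -
  define S where "S = (\<Sum>j=1..M. of_nat (A i j) * genF M A j)"
  have S_nth: "S $ k = of_nat (card (colored_trees M A {j. A i j = 1} k))" for k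
    unfolding S_def by (rule nth_sum_row_genF[where A = A and i = i, OF assms(2)])
  have card_single_vertex: "card (colored_trees M A {i} (Suc 0)) = 1"
    using colored_trees_single_vertex[OF assms(1)] by simp
  have "genF M A i $ n = (fps_X + S * genF M A i) $ n" for n
  proof -
    consider "n = 0" | "n = 1" | "n \<ge> 2" by linarith
    then show ?thesis
      by cases (simp_all add: genF_nth tcount_eq_card_colored_trees S_nth fps_mult_nth fps_X_def
          card_single_vertex card_colored_trees_first_child_decomp)
  qed
  then show ?thesis by (simp add: fps_eq_iff S_def)
qed

lemma genF_eq_X_div:
  assumes "i \<in> {1..M}" and "\<forall>j\<in>{1..M}. A i j \<in> {0, 1}"
  shows "genF M A i = fps_X / (1 - (\<Sum>j=1..M. of_nat (A i j) * genF M A j))"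
proof -
  define S where "S = (\<Sum>j=1..M. of_nat (A i j) * genF M A j)"
  have "S $ 0 = 0"
    unfolding S_def nth_sum_row_genF[where A = A and i = i, OF assms(2)] by simp
  then have "1 - S \<noteq> 0" by (metis fps_sub_nth fps_one_nth fps_zero_nth diff_zero one_neq_zero)
  moreover have "genF M A i * (1 - S) = fps_X"
    using genF_functional_equation[where A = A, OF assms] by (simp add: S_def algebra_simps)
  ultimately show ?thesis by (metis S_def nonzero_mult_div_cancel_right)
qed

definition block_mat :: "(nat \<Rightarrow> nat \<Rightarrow> nat) \<Rightarrow> (nat \<Rightarrow> nat \<Rightarrow> nat) \<Rightarrow> nat \<Rightarrow> nat \<Rightarrow> nat \<Rightarrow> nat" where
  "block_mat A B m p q = (if q \<le> m then (if p \<le> m then A p q else B (p - m) q) else 0)"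

lemma is_coloring_block_mat_iff:
  "root_color t \<in> {1..m} \<Longrightarrow> is_coloring (m + m') (block_mat A B m) t = is_coloring m A t"
proof (induction t)
  case (CNode c ts)
  have c: "c \<in> {1..m}" using CNode.prems by simp
  have "(block_mat A B m c (root_color x) = 1 \<and> is_coloring (m + m') (block_mat A B m) x)
      = (A c (root_color x) = 1 \<and> is_coloring m A x)" if x: "x \<in> set ts" for x
  proof (cases "root_color x \<in> {1..m}")
    case True
    moreover have "block_mat A B m c (root_color x) = A c (root_color x)"
      using True c by (simp add: block_mat_def)
    ultimately show ?thesis using CNode.IH[OF x] by simp
  next
    case False
    then show ?thesis using root_color_mem[of m A x] root_color_mem[of "m + m'" _ x]
      by (auto simp: block_mat_def)
  qed
  then show ?case using c by auto
qed

lemma genF_block_mat_old_color: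
  assumes "i \<in> {1..m}"
  shows "genF (m + m') (block_mat A B m) i = genF m A i"
proof -
  have "colored_trees (m + m') (block_mat A B m) {i} n = colored_trees m A {i} n" for n
    using assms is_coloring_block_mat_iff[of _ m m' A B] by (auto simp: colored_trees_def)
  then show ?thesis by (simp add: fps_eq_iff genF_nth tcount_eq_card_colored_trees)
qed

lemma sum_row_block_mat_genF:
  assumes "i > m"
  shows "(\<Sum>j=1..m + m'. of_nat (block_mat A B m i j) * genF (m + m') (block_mat A B m) j)
       = (\<Sum>j=1..m. of_nat (B (i - m) j) * genF m A j)"
proof -
  have "(\<Sum>j=1..m + m'. of_nat (block_mat A B m i j) * genF (m + m') (block_mat A B m) j)
      = (\<Sum>j=1..m. of_nat (block_mat A B m i j) * genF (m + m') (block_mat A B m) j)"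
    by (rule sum.mono_neutral_right) (auto simp: block_mat_def)
  also have "\<dots> = (\<Sum>j=1..m. of_nat (B (i - m) j) * genF m A j)"
    using assms by (intro sum.cong) (auto simp: block_mat_def genF_block_mat_old_color)
  finally show ?thesis .
qed

theorem theorem24:
  fixes m m' :: nat and A B :: "nat \<Rightarrow> nat \<Rightarrow> nat"
  assumes "\<forall>i\<in>{1..m}. \<forall>j\<in>{1..m}. A i j \<in> {0, 1}"
      and "\<forall>p\<in>{1..m'}. \<forall>q\<in>{1..m}. B p q \<in> {0, 1}"
  shows "(\<forall>i\<in>{1..m}.
            genF (m + m') (\<lambda>p q. if q \<le> m then (if p \<le> m then A p q else B (p - m) q) else 0) i
            = genF m A i)
       \<and> (\<forall>i\<in>{m+1..m+m'}.
            genF (m + m') (\<lambda>p q. if q \<le> m then (if p \<le> m then A p q else B (p - m) q) else 0) i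
            = fps_X / (1 - (\<Sum>j=1..m. of_nat (B (i - m) j) * genF m A j)))"
proof -
  have block: "(\<lambda>p q. if q \<le> m then (if p \<le> m then A p q else B (p - m) q) else 0) = block_mat A B m"
    by (simp add: block_mat_def fun_eq_iff)
  have "genF (m + m') (block_mat A B m) i = fps_X / (1 - (\<Sum>j=1..m. of_nat (B (i - m) j) * genF m A j))"
    if i: "i \<in> {m+1..m+m'}" for i
  proof -
    have "i - m \<in> {1..m'}" using i by auto
    then have "\<forall>j\<in>{1..m + m'}. block_mat A B m i j \<in> {0, 1}"
      using i assms(2) by (auto simp: block_mat_def)
    moreover have "i \<in> {1..m + m'}" using i by auto
    ultimately have "genF (m + m') (block_mat A B m) i = fps_X /
        (1 - (\<Sum>j=1..m + m'. of_nat (block_mat A B m i j) * genF (m + m') (block_mat A B m) j))"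
      by (intro genF_eq_X_div)
    also have "\<dots> = fps_X / (1 - (\<Sum>j=1..m. of_nat (B (i - m) j) * genF m A j))"
      using i by (subst sum_row_block_mat_genF) auto
    finally show ?thesis .
  qed
  then show ?thesis
    unfolding block using genF_block_mat_old_color by blast
qed

end
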